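(* The set $\mathcal{L}$ of $L$-convex polyominoes equals $Av_{\mathfrak{P}}(H,V,S_1,S_2)$, where $H=\begin{bmatrix}1&0&1\end{bmatrix}$, $V=\begin{bmatrix}1\\0\\1\end{bmatrix}$, $S_1=\begin{bmatrix}1&0\\0&1\end{bmatrix}$ and $S_2=\begin{bmatrix}0&1\\1&0\end{bmatrix}$.
   Context: A polyomino is a finite union of unit cells of $\mathbb{Z}\times\mathbb{Z}$ that is connected via edge adjacency, up to translation, identified with the binary matrix of its minimal bounding rectangle (entry $1$ iff the corresponding unit square is a cell; rows numbered bottom to top, first written row of a displayed matrix is the top row). A matrix is a submatrix of another if obtained by deleting rows and/or columns; $Av_{\mathfrak{P}}(\mathcal{M})$ is the set of polyominoes with no submatrix in $\mathcal{M}$. A polyomino is convex if each of its rows and each of its columns is connected. A path in a polyomino is a sequence of distinct cells of the polyomino in which consecutive cells share an edge; it is monotone if all its horizontal steps go in the same direction and all its vertical steps go in the same direction; a change of direction is a place where a horizontal step is followed by a vertical one or vice versa. A polyomino is $L$-convex if it is convex and every pair of its cells can be connected by a monotone path with at most one change of direction. *)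

theory Defs
  imports Main
begin

type_synonym cell = "int \<times> int"  (* (column x, row y); rows numbered bottom to top *)

definition adjacent :: "cell \<Rightarrow> cell \<Rightarrow> bool" where
  "adjacent p q \<longleftrightarrow> \<bar>fst p - fst q\<bar> + \<bar>snd p - snd q\<bar> = 1"

(* a (representative of a) polyomino: finite nonempty edge-connected set of cells *)
definition polyomino :: "cell set \<Rightarrow> bool" where
  "polyomino P \<longleftrightarrow> finite P \<and> P \<noteq> {} \<and>
     (\<forall>p\<in>P. \<forall>q\<in>P. (\<lambda>a b. a \<in> P \<and> b \<in> P \<and> adjacent a b)\<^sup>*\<^sup>* p q)"

(* binary matrix given as a list of rows; first list = top row *)
definition is_binmatrix :: "nat list list \<Rightarrow> bool" where
  "is_binmatrix M \<longleftrightarrow> M \<noteq> [] \<and> (\<forall>r\<in>set M. length r = length (hd M) \<and> set r \<subseteq> {0,1})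
     \<and> length (hd M) > 0"

(* M is a submatrix of the bounding-box matrix of P: choose rows f 0 < ... < f (m-1)
   (bottom to top) and columns g 0 < ... < g (n-1) of the bounding box *)
definition contains_pattern :: "cell set \<Rightarrow> nat list list \<Rightarrow> bool" where
  "contains_pattern P M \<longleftrightarrow>
     (let m = length M; n = length (hd M) in
      \<exists>f g :: nat \<Rightarrow> int.
        strict_mono_on {0..<m} f \<and> strict_mono_on {0..<n} g \<and>
        (\<forall>i<m. Min (snd ` P) \<le> f i \<and> f i \<le> Max (snd ` P)) \<and>
        (\<forall>j<n. Min (fst ` P) \<le> g j \<and> g j \<le> Max (fst ` P)) \<and>
        (\<forall>i<m. \<forall>j<n. ((g j, f i) \<in> P) \<longleftrightarrow> M ! (m - 1 - i) ! j = 1))"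

definition avoids :: "cell set \<Rightarrow> nat list list set \<Rightarrow> bool" where
  "avoids P \<M> \<longleftrightarrow> (\<forall>M\<in>\<M>. \<not> contains_pattern P M)"

definition convex_polyomino :: "cell set \<Rightarrow> bool" where
  "convex_polyomino P \<longleftrightarrow> polyomino P \<and>
     (\<forall>y x1 x2 x. (x1, y) \<in> P \<longrightarrow> (x2, y) \<in> P \<longrightarrow> x1 \<le> x \<longrightarrow> x \<le> x2 \<longrightarrow> (x, y) \<in> P) \<and>
     (\<forall>x y1 y2 y. (x, y1) \<in> P \<longrightarrow> (x, y2) \<in> P \<longrightarrow> y1 \<le> y \<longrightarrow> y \<le> y2 \<longrightarrow> (x, y) \<in> P)"

definition is_path :: "cell set \<Rightarrow> cell list \<Rightarrow> bool" where
  "is_path P xs \<longleftrightarrow> xs \<noteq> [] \<and> distinct xs \<and> set xs \<subseteq> P \<and>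
     (\<forall>i. Suc i < length xs \<longrightarrow> adjacent (xs ! i) (xs ! Suc i))"

definition step :: "cell list \<Rightarrow> nat \<Rightarrow> int \<times> int" where
  "step xs i = (fst (xs ! Suc i) - fst (xs ! i), snd (xs ! Suc i) - snd (xs ! i))"

definition horizontal_step :: "cell list \<Rightarrow> nat \<Rightarrow> bool" where
  "horizontal_step xs i \<longleftrightarrow> snd (step xs i) = 0"

definition monotone_path :: "cell list \<Rightarrow> bool" where
  "monotone_path xs \<longleftrightarrow>
     (\<forall>i j. Suc i < length xs \<longrightarrow> Suc j < length xs \<longrightarrow>
        horizontal_step xs i \<longrightarrow> horizontal_step xs j \<longrightarrow> step xs i = step xs j) \<and>
     (\<forall>i j. Suc i < length xs \<longrightarrow> Suc j < length xs \<longrightarrow>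
        \<not> horizontal_step xs i \<longrightarrow> \<not> horizontal_step xs j \<longrightarrow> step xs i = step xs j)"

definition direction_changes :: "cell list \<Rightarrow> nat" where
  "direction_changes xs = card {i. Suc (Suc i) < length xs \<and>
      horizontal_step xs i \<noteq> horizontal_step xs (Suc i)}"

definition L_convex :: "cell set \<Rightarrow> bool" where
  "L_convex P \<longleftrightarrow> convex_polyomino P \<and>
     (\<forall>p\<in>P. \<forall>q\<in>P. \<exists>xs. is_path P xs \<and> hd xs = p \<and> last xs = q \<and>
        monotone_path xs \<and> direction_changes xs \<le> 1)"

definition pat_H :: "nat list list" where "pat_H = [[1,0,1]]"
definition pat_V :: "nat list list" where "pat_V = [[1],[0],[1]]"
definition pat_S1 :: "nat list list" where "pat_S1 = [[1,0],[0,1]]"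
definition pat_S2 :: "nat list list" where "pat_S2 = [[0,1],[1,0]]"

end

theory Submission
  imports Defs
begin

text \<open>Rows and columns of a polyomino are connected exactly when no row contains
  the pattern H and no column the pattern V. For a convex polyomino, L-convexity is
  equivalent to the condition that for any two cells p and q one of the two other corners
  of the rectangle they span is a cell: the L-shaped route through such a corner stays
  inside the polyomino by convexity, and conversely a path with at most one change of
  direction turns at such a corner (or is a straight segment). A pair of cells with both
  other corners missing is precisely an occurrence of S1 or S2.\<close>

section \<open>Occurrences of the patterns\<close>

lemma mem_bounding_box:
  assumes "finite P" "(x, y) \<in> P"
  shows "Min (fst ` P) \<le> x \<and> x \<le> Max (fst ` P) \<and> Min (snd ` P) \<le> y \<and> y \<le> Max (snd ` P)"
proof -
  have "x \<in> fst ` P" "y \<in> snd ` P" using assms(2) by force+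
  then show ?thesis using assms(1) by auto
qed

lemma contains_pat_H_iff:
  assumes "finite P"
  shows "contains_pattern P pat_H \<longleftrightarrow>
    (\<exists>a b c y. a < b \<and> b < c \<and> (a, y) \<in> P \<and> (b, y) \<notin> P \<and> (c, y) \<in> P)"
proof
  assume "contains_pattern P pat_H"
  then obtain f g :: "nat \<Rightarrow> int" where g: "strict_mono_on {0..<3} g"
    and m: "\<forall>j<3. (g j, f 0) \<in> P \<longleftrightarrow> [1::nat, 0, 1] ! j = 1"
    unfolding contains_pattern_def pat_H_def Let_def by (auto simp: numeral_3_eq_3)
  have "g 0 < g 1" "g 1 < g 2" by (auto intro: strict_mono_onD[OF g])
  moreover have "(g 0, f 0) \<in> P" "(g 1, f 0) \<notin> P" "(g 2, f 0) \<in> P" using m by auto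
  ultimately show "\<exists>a b c y. a < b \<and> b < c \<and> (a, y) \<in> P \<and> (b, y) \<notin> P \<and> (c, y) \<in> P"
    by blast
next
  assume "\<exists>a b c y. a < b \<and> b < c \<and> (a, y) \<in> P \<and> (b, y) \<notin> P \<and> (c, y) \<in> P"
  then obtain a b c y where *: "a < b" "b < c" "(a, y) \<in> P" "(b, y) \<notin> P" "(c, y) \<in> P" by blast
  show "contains_pattern P pat_H"
    unfolding contains_pattern_def pat_H_def Let_def
    using * mem_bounding_box[OF assms *(3)] mem_bounding_box[OF assms *(5)]
    by (intro exI[of _ "\<lambda>_. y"] exI[of _ "\<lambda>j. if j = 0 then a else if j = 1 then b else c"])
      (auto simp: strict_mono_on_def less_Suc_eq numeral_3_eq_3)
qed

lemma contains_pat_V_iff: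
  assumes "finite P"
  shows "contains_pattern P pat_V \<longleftrightarrow>
    (\<exists>a b c x. a < b \<and> b < c \<and> (x, a) \<in> P \<and> (x, b) \<notin> P \<and> (x, c) \<in> P)"
proof
  assume "contains_pattern P pat_V"
  then obtain f g :: "nat \<Rightarrow> int" where f: "strict_mono_on {0..<3} f"
    and m: "\<forall>i<3. (g 0, f i) \<in> P \<longleftrightarrow> [[1::nat], [0], [1]] ! (2 - i) ! 0 = 1"
    unfolding contains_pattern_def pat_V_def Let_def by (auto simp: numeral_3_eq_3 numeral_2_eq_2)
  have "f 0 < f 1" "f 1 < f 2" by (auto intro: strict_mono_onD[OF f])
  moreover have "(g 0, f 0) \<in> P" "(g 0, f 1) \<notin> P" "(g 0, f 2) \<in> P" using m by auto
  ultimately show "\<exists>a b c x. a < b \<and> b < c \<and> (x, a) \<in> P \<and> (x, b) \<notin> P \<and> (x, c) \<in> P"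
    by blast
next
  assume "\<exists>a b c x. a < b \<and> b < c \<and> (x, a) \<in> P \<and> (x, b) \<notin> P \<and> (x, c) \<in> P"
  then obtain a b c x where *: "a < b" "b < c" "(x, a) \<in> P" "(x, b) \<notin> P" "(x, c) \<in> P" by blast
  show "contains_pattern P pat_V"
    unfolding contains_pattern_def pat_V_def Let_def
    using * mem_bounding_box[OF assms *(3)] mem_bounding_box[OF assms *(5)]
    by (intro exI[of _ "\<lambda>i. if i = 0 then a else if i = 1 then b else c"] exI[of _ "\<lambda>_. x"])
      (auto simp: strict_mono_on_def less_Suc_eq numeral_3_eq_3)
qed

lemma contains_pat_S1_iff:
  assumes "finite P"
  shows "contains_pattern P pat_S1 \<longleftrightarrow>
    (\<exists>a b y1 y2. a < b \<and> y1 < y2 \<and> (a, y2) \<in> P \<and> (b, y1) \<in> P \<and> (b, y2) \<notin> P \<and> (a, y1) \<notin> P)"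
proof
  assume "contains_pattern P pat_S1"
  then obtain f g :: "nat \<Rightarrow> int"
    where f: "strict_mono_on {0..<2} f" and g: "strict_mono_on {0..<2} g"
    and m: "\<forall>i<2. \<forall>j<2. (g j, f i) \<in> P \<longleftrightarrow> [[1::nat, 0], [0, 1]] ! (1 - i) ! j = 1"
    unfolding contains_pattern_def pat_S1_def Let_def by (auto simp: numeral_2_eq_2)
  have "f 0 < f 1" "g 0 < g 1" by (auto intro: strict_mono_onD[OF f] strict_mono_onD[OF g])
  moreover have "(g 0, f 1) \<in> P" "(g 1, f 0) \<in> P" "(g 1, f 1) \<notin> P" "(g 0, f 0) \<notin> P"
    using m by auto
  ultimately show "\<exists>a b y1 y2. a < b \<and> y1 < y2 \<and>
      (a, y2) \<in> P \<and> (b, y1) \<in> P \<and> (b, y2) \<notin> P \<and> (a, y1) \<notin> P"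
    by blast
next
  assume "\<exists>a b y1 y2. a < b \<and> y1 < y2 \<and> (a, y2) \<in> P \<and> (b, y1) \<in> P \<and> (b, y2) \<notin> P \<and> (a, y1) \<notin> P"
  then obtain a b y1 y2 where
    *: "a < b" "y1 < y2" "(a, y2) \<in> P" "(b, y1) \<in> P" "(b, y2) \<notin> P" "(a, y1) \<notin> P"
    by blast
  show "contains_pattern P pat_S1"
    unfolding contains_pattern_def pat_S1_def Let_def
    using * mem_bounding_box[OF assms *(3)] mem_bounding_box[OF assms *(4)]
    by (intro exI[of _ "\<lambda>i. if i = 0 then y1 else y2"] exI[of _ "\<lambda>j. if j = 0 then a else b"])
      (auto simp: strict_mono_on_def less_Suc_eq)
qed

lemma contains_pat_S2_iff:
  assumes "finite P"
  shows "contains_pattern P pat_S2 \<longleftrightarrow>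
    (\<exists>a b y1 y2. a < b \<and> y1 < y2 \<and> (a, y1) \<in> P \<and> (b, y2) \<in> P \<and> (a, y2) \<notin> P \<and> (b, y1) \<notin> P)"
proof
  assume "contains_pattern P pat_S2"
  then obtain f g :: "nat \<Rightarrow> int"
    where f: "strict_mono_on {0..<2} f" and g: "strict_mono_on {0..<2} g"
    and m: "\<forall>i<2. \<forall>j<2. (g j, f i) \<in> P \<longleftrightarrow> [[0::nat, 1], [1, 0]] ! (1 - i) ! j = 1"
    unfolding contains_pattern_def pat_S2_def Let_def by (auto simp: numeral_2_eq_2)
  have "f 0 < f 1" "g 0 < g 1" by (auto intro: strict_mono_onD[OF f] strict_mono_onD[OF g])
  moreover have "(g 0, f 0) \<in> P" "(g 1, f 1) \<in> P" "(g 0, f 1) \<notin> P" "(g 1, f 0) \<notin> P"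
    using m by auto
  ultimately show "\<exists>a b y1 y2. a < b \<and> y1 < y2 \<and>
      (a, y1) \<in> P \<and> (b, y2) \<in> P \<and> (a, y2) \<notin> P \<and> (b, y1) \<notin> P"
    by blast
next
  assume "\<exists>a b y1 y2. a < b \<and> y1 < y2 \<and> (a, y1) \<in> P \<and> (b, y2) \<in> P \<and> (a, y2) \<notin> P \<and> (b, y1) \<notin> P"
  then obtain a b y1 y2 where
    *: "a < b" "y1 < y2" "(a, y1) \<in> P" "(b, y2) \<in> P" "(a, y2) \<notin> P" "(b, y1) \<notin> P"
    by blast
  show "contains_pattern P pat_S2"
    unfolding contains_pattern_def pat_S2_def Let_def
    using * mem_bounding_box[OF assms *(3)] mem_bounding_box[OF assms *(4)]
    by (intro exI[of _ "\<lambda>i. if i = 0 then y1 else y2"] exI[of _ "\<lambda>j. if j = 0 then a else b"])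
      (auto simp: strict_mono_on_def less_Suc_eq)
qed

section \<open>Convexity\<close>

lemma rows_convex_iff_not_contains_pat_H:
  fixes P :: "cell set"
  assumes "finite P"
  shows "(\<forall>y x1 x2 x. (x1, y) \<in> P \<longrightarrow> (x2, y) \<in> P \<longrightarrow> x1 \<le> x \<longrightarrow> x \<le> x2 \<longrightarrow> (x, y) \<in> P)
    \<longleftrightarrow> \<not> contains_pattern P pat_H" (is "?convex \<longleftrightarrow> _")
  unfolding contains_pat_H_iff[OF assms]
proof
  assume ?convex
  show "\<not> (\<exists>a b c y. a < b \<and> b < c \<and> (a, y) \<in> P \<and> (b, y) \<notin> P \<and> (c, y) \<in> P)"
  proof
    assume "\<exists>a b c y. a < b \<and> b < c \<and> (a, y) \<in> P \<and> (b, y) \<notin> P \<and> (c, y) \<in> P"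
    then obtain a b c y where "a < b" "b < c" "(a, y) \<in> P" "(b, y) \<notin> P" "(c, y) \<in> P" by blast
    with \<open>?convex\<close>[rule_format, of a y c b] show False by simp
  qed
next
  assume no_gap: "\<not> (\<exists>a b c y. a < b \<and> b < c \<and> (a, y) \<in> P \<and> (b, y) \<notin> P \<and> (c, y) \<in> P)"
  show ?convex
  proof (intro allI impI)
    fix y x1 x2 x assume "(x1, y) \<in> P" "(x2, y) \<in> P" "x1 \<le> x" "x \<le> x2"
    then show "(x, y) \<in> P"
      using no_gap by (cases "x = x1 \<or> x = x2") (auto simp: order.order_iff_strict)
  qed
qed

lemma columns_convex_iff_not_contains_pat_V:
  fixes P :: "cell set"
  assumes "finite P"
  shows "(\<forall>x y1 y2 y. (x, y1) \<in> P \<longrightarrow> (x, y2) \<in> P \<longrightarrow> y1 \<le> y \<longrightarrow> y \<le> y2 \<longrightarrow> (x, y) \<in> P)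
    \<longleftrightarrow> \<not> contains_pattern P pat_V" (is "?convex \<longleftrightarrow> _")
  unfolding contains_pat_V_iff[OF assms]
proof
  assume ?convex
  show "\<not> (\<exists>a b c x. a < b \<and> b < c \<and> (x, a) \<in> P \<and> (x, b) \<notin> P \<and> (x, c) \<in> P)"
  proof
    assume "\<exists>a b c x. a < b \<and> b < c \<and> (x, a) \<in> P \<and> (x, b) \<notin> P \<and> (x, c) \<in> P"
    then obtain a b c x where "a < b" "b < c" "(x, a) \<in> P" "(x, b) \<notin> P" "(x, c) \<in> P" by blast
    with \<open>?convex\<close>[rule_format, of x a c b] show False by simp
  qed
next
  assume no_gap: "\<not> (\<exists>a b c x. a < b \<and> b < c \<and> (x, a) \<in> P \<and> (x, b) \<notin> P \<and> (x, c) \<in> P)"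
  show ?convex
  proof (intro allI impI)
    fix x y1 y2 y assume "(x, y1) \<in> P" "(x, y2) \<in> P" "y1 \<le> y" "y \<le> y2"
    then show "(x, y) \<in> P"
      using no_gap by (cases "y = y1 \<or> y = y2") (auto simp: order.order_iff_strict)
  qed
qed

lemma convex_polyomino_iff_not_contains_pat_H_V:
  "convex_polyomino P \<longleftrightarrow>
     polyomino P \<and> \<not> contains_pattern P pat_H \<and> \<not> contains_pattern P pat_V"
proof (cases "polyomino P")
  case True
  then have "finite P" by (simp add: polyomino_def)
  with True show ?thesis
    unfolding convex_polyomino_def rows_convex_iff_not_contains_pat_H[OF \<open>finite P\<close>]
      columns_convex_iff_not_contains_pat_V[OF \<open>finite P\<close>]
    by simp
qed (simp add: convex_polyomino_def)

section \<open>Corner cells\<close>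

definition has_corner_cell :: "cell set \<Rightarrow> cell \<Rightarrow> cell \<Rightarrow> bool" where
  "has_corner_cell P p q \<longleftrightarrow> (fst q, snd p) \<in> P \<or> (fst p, snd q) \<in> P"

lemma corner_cells_iff_not_contains_pat_S1_S2:
  assumes "finite P"
  shows "(\<forall>p\<in>P. \<forall>q\<in>P. has_corner_cell P p q) \<longleftrightarrow>
    \<not> contains_pattern P pat_S1 \<and> \<not> contains_pattern P pat_S2"
  unfolding contains_pat_S1_iff[OF assms] contains_pat_S2_iff[OF assms]
proof safe
  fix a b y1 y2 :: int
  assume corners: "\<forall>p\<in>P. \<forall>q\<in>P. has_corner_cell P p q"
  show "(a, y2) \<in> P \<Longrightarrow> (b, y1) \<in> P \<Longrightarrow> (b, y2) \<notin> P \<Longrightarrow> (a, y1) \<notin> P \<Longrightarrow> False"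
    using corners[rule_format, of "(a, y2)" "(b, y1)"] by (simp add: has_corner_cell_def)
  show "(a, y1) \<in> P \<Longrightarrow> (b, y2) \<in> P \<Longrightarrow> (a, y2) \<notin> P \<Longrightarrow> (b, y1) \<notin> P \<Longrightarrow> False"
    using corners[rule_format, of "(a, y1)" "(b, y2)"] by (simp add: has_corner_cell_def)
next
  fix x1 y1 x2 y2 :: int
  assume "\<nexists>a b y1 y2. a < b \<and> y1 < y2 \<and> (a, y2) \<in> P \<and> (b, y1) \<in> P \<and> (b, y2) \<notin> P \<and> (a, y1) \<notin> P"
    and "\<nexists>a b y1 y2. a < b \<and> y1 < y2 \<and> (a, y1) \<in> P \<and> (b, y2) \<in> P \<and> (a, y2) \<notin> P \<and> (b, y1) \<notin> P"
    and "(x1, y1) \<in> P" "(x2, y2) \<in> P"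
  then show "has_corner_cell P (x1, y1) (x2, y2)"
    unfolding has_corner_cell_def fst_conv snd_conv
    by (cases x1 x2 rule: linorder_cases; cases y1 y2 rule: linorder_cases) blast+
qed

section \<open>L-shaped paths in convex polyominoes\<close>

lemma sgn_offset_between:
  fixes a b :: int
  assumes "k \<le> nat \<bar>b - a\<bar>"
  shows "min a b \<le> a + sgn (b - a) * int k \<and> a + sgn (b - a) * int k \<le> max a b"
  using assms by (cases "a < b"; cases "a = b") (auto simp: sgn_if)

lemma adjacent_iff_unit_difference:
  "adjacent p q \<longleftrightarrow> \<bar>fst q - fst p\<bar> + \<bar>snd q - snd p\<bar> = 1"
  unfolding adjacent_def by linarith

lemma adjacent_nth_iff_step:
  "adjacent (xs ! i) (xs ! Suc i) \<longleftrightarrow> \<bar>fst (step xs i)\<bar> + \<bar>snd (step xs i)\<bar> = 1"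
  by (simp add: adjacent_iff_unit_difference step_def)

locale hv_walk =
  fixes x1 y1 x2 y2 :: int
begin

definition hlen :: nat where "hlen = nat \<bar>x2 - x1\<bar>"
definition vlen :: nat where "vlen = nat \<bar>y2 - y1\<bar>"

definition point :: "nat \<Rightarrow> cell" where
  "point k = (if k < hlen then (x1 + sgn (x2 - x1) * int k, y1)
              else (x2, y1 + sgn (y2 - y1) * int (k - hlen)))"

definition cells :: "cell list" where
  "cells = map point [0..<hlen + vlen + 1]"

lemma length_cells: "length cells = hlen + vlen + 1"
  by (simp add: cells_def)

lemma nth_cells: "k < length cells \<Longrightarrow> cells ! k = point k"
  by (simp add: cells_def length_cells del: upt_Suc)

lemma x_offset: "sgn (x2 - x1) * int hlen = x2 - x1"
  by (simp add: hlen_def sgn_mult_abs)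

lemma y_offset: "sgn (y2 - y1) * int vlen = y2 - y1"
  by (simp add: vlen_def sgn_mult_abs)

lemma hd_cells: "hd cells = (x1, y1)"
  by (simp add: cells_def hd_map point_def hlen_def del: upt_Suc)

lemma last_cells: "last cells = (x2, y2)"
proof -
  have "last cells = point (hlen + vlen)"
    by (simp add: cells_def last_map del: upt_Suc)
  then show ?thesis using y_offset by (simp add: point_def)
qed

lemma distance_point:
  assumes "k \<le> hlen + vlen"
  shows "\<bar>fst (point k) - x1\<bar> + \<bar>snd (point k) - y1\<bar> = int k"
proof (cases "k < hlen")
  case True
  then have "\<bar>sgn (x2 - x1)\<bar> = 1" by (simp add: hlen_def abs_sgn_eq)
  with True show ?thesis by (simp add: point_def abs_mult)
next
  case False
  have "\<bar>sgn (y2 - y1) * int (k - hlen)\<bar> = int (k - hlen)"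
    using False assms by (cases "k = hlen") (auto simp: vlen_def abs_mult abs_sgn_eq)
  moreover have "\<bar>x2 - x1\<bar> = int hlen" by (simp add: hlen_def)
  ultimately show ?thesis using False by (simp add: point_def)
qed

lemma distinct_cells: "distinct cells"
proof -
  have "inj_on point {0..<hlen + vlen + 1}"
  proof (rule inj_onI)
    fix k l assume k: "k \<in> {0..<hlen + vlen + 1}" and l: "l \<in> {0..<hlen + vlen + 1}"
      and eq: "point k = point l"
    have "int k = \<bar>fst (point k) - x1\<bar> + \<bar>snd (point k) - y1\<bar>"
      using k by (simp add: distance_point)
    also have "\<dots> = int l"
      unfolding eq using l by (simp add: distance_point)
    finally show "k = l" by simp
  qed
  then show ?thesis by (simp add: cells_def distinct_map del: upt_Suc)
qed

lemma step_cells: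
  assumes "Suc i < length cells"
  shows "step cells i = (if i < hlen then (sgn (x2 - x1), 0) else (0, sgn (y2 - y1)))"
proof -
  have "step cells i = (fst (point (Suc i)) - fst (point i), snd (point (Suc i)) - snd (point i))"
    using assms by (simp add: step_def nth_cells)
  moreover have "x2 - (x1 + sgn (x2 - x1) * int i) = sgn (x2 - x1)" if "Suc i = hlen"
    using x_offset[folded that] by (simp add: algebra_simps)
  ultimately show ?thesis
    by (auto simp: point_def algebra_simps Suc_diff_le)
qed

lemma horizontal_step_cells:
  "Suc i < length cells \<Longrightarrow> horizontal_step cells i \<longleftrightarrow> i < hlen"
  by (auto simp: horizontal_step_def step_cells length_cells vlen_def sgn_0_0)

lemma adjacent_cells:
  assumes "Suc i < length cells"
  shows "adjacent (cells ! i) (cells ! Suc i)"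
proof -
  have "i < hlen \<Longrightarrow> \<bar>sgn (x2 - x1)\<bar> = 1"
    by (simp add: hlen_def abs_sgn_eq)
  moreover have "\<not> i < hlen \<Longrightarrow> \<bar>sgn (y2 - y1)\<bar> = 1"
    using assms by (auto simp: length_cells vlen_def abs_sgn_eq)
  ultimately show ?thesis
    using assms by (simp add: adjacent_nth_iff_step step_cells)
qed

lemma monotone_path_cells: "monotone_path cells"
  unfolding monotone_path_def by (simp add: step_cells horizontal_step_cells)

lemma direction_changes_cells: "direction_changes cells \<le> 1"
proof -
  have "{i. Suc (Suc i) < length cells \<and> horizontal_step cells i \<noteq> horizontal_step cells (Suc i)}
    \<subseteq> {hlen - 1}"
    by (auto simp: horizontal_step_cells)
  then have "card {i. Suc (Suc i) < length cells \<and>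
      horizontal_step cells i \<noteq> horizontal_step cells (Suc i)} \<le> card {hlen - 1}"
    by (intro card_mono) auto
  then show ?thesis by (simp add: direction_changes_def)
qed

end

lemma step_rev:
  assumes "Suc i < length xs"
  shows "step (rev xs) i =
    (- fst (step xs (length xs - 2 - i)), - snd (step xs (length xs - 2 - i)))"
proof -
  have "rev xs ! i = xs ! Suc (length xs - 2 - i)" "rev xs ! Suc i = xs ! (length xs - 2 - i)"
    using assms by (simp_all add: rev_nth Suc_diff_Suc numeral_2_eq_2)
  then show ?thesis by (simp add: step_def)
qed

lemma horizontal_step_rev:
  "Suc i < length xs \<Longrightarrow> horizontal_step (rev xs) i \<longleftrightarrow> horizontal_step xs (length xs - 2 - i)"
  by (simp add: horizontal_step_def step_rev)

lemma is_path_rev: "is_path P xs \<Longrightarrow> is_path P (rev xs)"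
  unfolding is_path_def
  by (auto simp: adjacent_nth_iff_step step_rev)

lemma monotone_path_iff_same_kind_same_step:
  "monotone_path xs \<longleftrightarrow> (\<forall>i j. Suc i < length xs \<longrightarrow> Suc j < length xs \<longrightarrow>
     horizontal_step xs i = horizontal_step xs j \<longrightarrow> step xs i = step xs j)"
  unfolding monotone_path_def by blast

lemma monotone_path_rev:
  assumes "monotone_path xs"
  shows "monotone_path (rev xs)"
  unfolding monotone_path_iff_same_kind_same_step
proof (intro allI impI)
  fix i j
  assume ij: "Suc i < length (rev xs)" "Suc j < length (rev xs)"
    and "horizontal_step (rev xs) i = horizontal_step (rev xs) j"
  then have "step xs (length xs - 2 - i) = step xs (length xs - 2 - j)"
    using assms[unfolded monotone_path_iff_same_kind_same_step, rule_format,
        of "length xs - 2 - i" "length xs - 2 - j"]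
    by (simp add: horizontal_step_rev)
  with ij show "step (rev xs) i = step (rev xs) j" by (simp add: step_rev)
qed

lemma direction_changes_rev: "direction_changes (rev xs) = direction_changes xs"
proof -
  define n where "n = length xs"
  let ?changes = "\<lambda>ys. {i. Suc (Suc i) < n \<and> horizontal_step ys i \<noteq> horizontal_step ys (Suc i)}"
  have "bij_betw (\<lambda>i. n - 3 - i) (?changes (rev xs)) (?changes xs)"
    by (rule bij_betw_byWitness[where f' = "\<lambda>i. n - 3 - i"])
      (auto simp: n_def horizontal_step_rev numeral_3_eq_3 numeral_2_eq_2 Suc_diff_Suc)
  then show ?thesis
    unfolding direction_changes_def n_def by (simp add: bij_betw_same_card)
qed

definition L_path :: "cell set \<Rightarrow> cell \<Rightarrow> cell \<Rightarrow> cell list \<Rightarrow> bool" where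
  "L_path P p q xs \<longleftrightarrow> is_path P xs \<and> hd xs = p \<and> last xs = q \<and>
     monotone_path xs \<and> direction_changes xs \<le> 1"

lemma convex_polyomino_row_between:
  "convex_polyomino P \<Longrightarrow> (x1, y) \<in> P \<Longrightarrow> (x2, y) \<in> P \<Longrightarrow>
    min x1 x2 \<le> x \<Longrightarrow> x \<le> max x1 x2 \<Longrightarrow> (x, y) \<in> P"
  unfolding convex_polyomino_def by (metis max_def min_def)

lemma convex_polyomino_column_between:
  "convex_polyomino P \<Longrightarrow> (x, y1) \<in> P \<Longrightarrow> (x, y2) \<in> P \<Longrightarrow>
    min y1 y2 \<le> y \<Longrightarrow> y \<le> max y1 y2 \<Longrightarrow> (x, y) \<in> P"
  unfolding convex_polyomino_def by (metis max_def min_def)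

lemma (in hv_walk) set_cells_subset:
  assumes "convex_polyomino P" "(x1, y1) \<in> P" "(x2, y1) \<in> P" "(x2, y2) \<in> P"
  shows "set cells \<subseteq> P"
proof
  fix c assume "c \<in> set cells"
  then obtain k where k: "k < hlen + vlen + 1" "c = point k"
    by (auto simp: cells_def simp del: upt_Suc)
  show "c \<in> P"
  proof (cases "k < hlen")
    case True
    then have "min x1 x2 \<le> x1 + sgn (x2 - x1) * int k \<and>
        x1 + sgn (x2 - x1) * int k \<le> max x1 x2"
      by (intro sgn_offset_between) (simp add: hlen_def)
    with True k show ?thesis
      using convex_polyomino_row_between[OF assms(1-3)] by (auto simp: point_def)
  next
    case False
    then have "min y1 y2 \<le> y1 + sgn (y2 - y1) * int (k - hlen) \<and>
        y1 + sgn (y2 - y1) * int (k - hlen) \<le> max y1 y2"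
      using k by (intro sgn_offset_between) (simp add: vlen_def)
    with False k show ?thesis
      using convex_polyomino_column_between[OF assms(1,3,4)] by (auto simp: point_def)
  qed
qed

lemma (in hv_walk) L_path_cells:
  assumes "convex_polyomino P" "(x1, y1) \<in> P" "(x2, y1) \<in> P" "(x2, y2) \<in> P"
  shows "L_path P (x1, y1) (x2, y2) cells"
proof -
  have "cells \<noteq> []" using length_cells by auto
  then show ?thesis
    using set_cells_subset[OF assms] distinct_cells adjacent_cells direction_changes_cells
    by (simp add: L_path_def is_path_def hd_cells last_cells monotone_path_cells)
qed

lemma L_path_rev: "L_path P p q xs \<Longrightarrow> L_path P q p (rev xs)"
  unfolding L_path_def
  by (auto simp: is_path_rev monotone_path_rev direction_changes_rev hd_rev last_rev)

lemma L_path_if_has_corner_cell: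
  assumes "convex_polyomino P" "p \<in> P" "q \<in> P" "has_corner_cell P p q"
  shows "\<exists>xs. L_path P p q xs"
proof -
  obtain x1 y1 x2 y2 where pq: "p = (x1, y1)" "q = (x2, y2)" by fastforce
  from assms(4) consider "(x2, y1) \<in> P" | "(x1, y2) \<in> P"
    unfolding has_corner_cell_def pq by auto
  then show ?thesis
  proof cases
    case 1
    then show ?thesis
      using hv_walk.L_path_cells[OF assms(1)] assms(2,3) pq by blast
  next
    case 2
    then have "L_path P q p (hv_walk.cells x2 y2 x1 y1)"
      using hv_walk.L_path_cells[OF assms(1)] assms(2,3) pq by blast
    then show ?thesis using L_path_rev by blast
  qed
qed

section \<open>Paths with at most one change of direction\<close>

lemma eq_if_Suc_eq_between:
  assumes "a \<le> b" "\<And>i. a \<le> i \<Longrightarrow> i < b \<Longrightarrow> f (Suc i) = f i"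
  shows "f b = f a"
  using assms by (induction b rule: dec_induct) auto

lemma snd_nth_eq_if_horizontal_steps:
  assumes "a \<le> b" "\<And>i. a \<le> i \<Longrightarrow> i < b \<Longrightarrow> horizontal_step xs i"
  shows "snd (xs ! b) = snd (xs ! a)"
  using assms by (induction b rule: dec_induct) (auto simp: horizontal_step_def step_def)

lemma fst_nth_eq_if_vertical_steps:
  assumes "a \<le> b"
    and "\<And>i. a \<le> i \<Longrightarrow> i < b \<Longrightarrow> adjacent (xs ! i) (xs ! Suc i) \<and> \<not> horizontal_step xs i"
  shows "fst (xs ! b) = fst (xs ! a)"
  using assms(1)
proof (induction b rule: dec_induct)
  case (step n)
  have "\<bar>fst (step xs n)\<bar> + \<bar>snd (step xs n)\<bar> = 1" "snd (step xs n) \<noteq> 0"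
    using assms(2)[OF step.hyps] by (simp_all add: adjacent_nth_iff_step horizontal_step_def)
  then show ?case using step.IH by (simp add: step_def)
qed simp

lemma at_most_one_direction_change:
  assumes "Suc 0 < length xs" "direction_changes xs \<le> 1"
  obtains c where "Suc c < length xs"
    "\<And>i. i \<le> c \<Longrightarrow> horizontal_step xs i = horizontal_step xs 0"
    "\<And>i. c < i \<Longrightarrow> Suc i < length xs \<Longrightarrow> horizontal_step xs i \<noteq> horizontal_step xs 0"
proof -
  define n where "n = length xs"
  define h where "h = horizontal_step xs"
  define D where "D = {i. Suc (Suc i) < n \<and> h i \<noteq> h (Suc i)}"
  have "finite D" unfolding D_def by (rule finite_subset[of _ "{..<n}"]) auto
  have "card D \<le> 1" using assms(2) by (simp add: direction_changes_def D_def n_def h_def)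
  have const: "h j = h i" if "i \<le> j" "Suc j < n" "\<And>d. i \<le> d \<Longrightarrow> d < j \<Longrightarrow> d \<notin> D" for i j
    using eq_if_Suc_eq_between[of i j h] that by (force simp: D_def)
  show thesis
  proof (cases "D = {}")
    case True
    show thesis
    proof (rule that[of "n - 2"])
      show "Suc (n - 2) < length xs" using assms(1) by (simp add: n_def)
      show "horizontal_step xs i = horizontal_step xs 0" if "i \<le> n - 2" for i
        using const[of 0 i] that True assms(1) by (simp add: h_def n_def)
    qed (simp add: n_def)
  next
    case False
    then obtain c where "c \<in> D" by blast
    with \<open>finite D\<close> \<open>card D \<le> 1\<close> have only_c: "d \<in> D \<Longrightarrow> d = c" for d
      using card_le_Suc0_iff_eq by auto
    from \<open>c \<in> D\<close> have "Suc (Suc c) < n" "h c \<noteq> h (Suc c)" by (auto simp: D_def)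
    show thesis
    proof (rule that[of c])
      show "Suc c < length xs" using \<open>Suc (Suc c) < n\<close> by (simp add: n_def)
      show first: "horizontal_step xs i = horizontal_step xs 0" if "i \<le> c" for i
        using const[of 0 i] only_c that \<open>Suc (Suc c) < n\<close> by (force simp: h_def)
      show "horizontal_step xs i \<noteq> horizontal_step xs 0" if "c < i" "Suc i < length xs" for i
      proof -
        have "h i = h (Suc c)" using const[of "Suc c" i] only_c that by (force simp: n_def)
        with \<open>h c \<noteq> h (Suc c)\<close> first[of c] show ?thesis by (simp add: h_def)
      qed
    qed
  qed
qed

lemma has_corner_cell_if_path:
  assumes path: "is_path P xs" and changes: "direction_changes xs \<le> 1"
  shows "has_corner_cell P (hd xs) (last xs)"
proof -
  have "xs \<noteq> []" and adj: "\<And>i. Suc i < length xs \<Longrightarrow> adjacent (xs ! i) (xs ! Suc i)"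
    and inP: "\<And>i. i < length xs \<Longrightarrow> xs ! i \<in> P"
    using path by (auto simp: is_path_def)
  then have ends: "hd xs = xs ! 0" "last xs = xs ! (length xs - 1)"
    by (simp_all add: hd_conv_nth last_conv_nth)
  show ?thesis
  proof (cases "length xs = 1")
    case True
    then show ?thesis using ends inP by (simp add: has_corner_cell_def)
  next
    case False
    with \<open>xs \<noteq> []\<close> have "Suc 0 < length xs" by (simp add: Suc_lessI)
    then show ?thesis
    proof (rule at_most_one_direction_change[OF _ changes])
      fix c assume c: "Suc c < length xs"
        and first: "\<And>i. i \<le> c \<Longrightarrow> horizontal_step xs i = horizontal_step xs 0"
        and second: "\<And>i. c < i \<Longrightarrow> Suc i < length xs \<Longrightarrow>
          horizontal_step xs i \<noteq> horizontal_step xs 0"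
      have "xs ! Suc c \<in> P" using inP c by simp
      show ?thesis
      proof (cases "horizontal_step xs 0")
        case True
        have "snd (xs ! Suc c) = snd (xs ! 0)"
          by (rule snd_nth_eq_if_horizontal_steps) (use first True in auto)
        moreover have "fst (xs ! (length xs - 1)) = fst (xs ! Suc c)"
          by (rule fst_nth_eq_if_vertical_steps) (use second True c adj in auto)
        ultimately have "(fst (last xs), snd (hd xs)) = xs ! Suc c"
          using ends by (simp add: prod_eq_iff)
        with \<open>xs ! Suc c \<in> P\<close> show ?thesis by (simp add: has_corner_cell_def)
      next
        case False
        have "fst (xs ! Suc c) = fst (xs ! 0)"
          by (rule fst_nth_eq_if_vertical_steps) (use first False c adj in auto)
        moreover have "snd (xs ! (length xs - 1)) = snd (xs ! Suc c)"
          by (rule snd_nth_eq_if_horizontal_steps) (use second False c in auto)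
        ultimately have "(fst (hd xs), snd (last xs)) = xs ! Suc c"
          using ends by (simp add: prod_eq_iff)
        with \<open>xs ! Suc c \<in> P\<close> show ?thesis by (simp add: has_corner_cell_def)
      qed
    qed
  qed
qed

lemma L_convex_iff_L_paths:
  "L_convex P \<longleftrightarrow> convex_polyomino P \<and> (\<forall>p\<in>P. \<forall>q\<in>P. \<exists>xs. L_path P p q xs)"
  by (simp add: L_convex_def L_path_def)

lemma L_convex_iff_corner_cells:
  "L_convex P \<longleftrightarrow> convex_polyomino P \<and> (\<forall>p\<in>P. \<forall>q\<in>P. has_corner_cell P p q)"
  unfolding L_convex_iff_L_paths
  using L_path_if_has_corner_cell has_corner_cell_if_path
  by (metis L_path_def)

theorem proposition15:
  "{P. polyomino P \<and> L_convex P} =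
   {P. polyomino P \<and> avoids P {pat_H, pat_V, pat_S1, pat_S2}}"
proof (rule Collect_cong)
  fix P
  show "polyomino P \<and> L_convex P \<longleftrightarrow> polyomino P \<and> avoids P {pat_H, pat_V, pat_S1, pat_S2}"
  proof (cases "polyomino P")
    case True
    then have "finite P" by (simp add: polyomino_def)
    have "L_convex P \<longleftrightarrow> convex_polyomino P \<and> (\<forall>p\<in>P. \<forall>q\<in>P. has_corner_cell P p q)"
      by (rule L_convex_iff_corner_cells)
    also have "\<dots> \<longleftrightarrow> avoids P {pat_H, pat_V, pat_S1, pat_S2}"
      using True \<open>finite P\<close>
      by (simp add: convex_polyomino_iff_not_contains_pat_H_V
          corner_cells_iff_not_contains_pat_S1_S2 avoids_def)
    finally show ?thesis by simp
  qed simp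
qed

end
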